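(* Let $\xi_1,\dots,\xi_n$ be i.i.d. with law $P$ on $\mathcal Z$, $w_1,\dots,w_n\in[0,1]$ with $\|\mathbf w\|_1=\sum_iw_i>0$. Let $\mathcal F$ be a countable collection of measurable functions $\mathcal Z\to[0,1]$, $f_0:\mathcal Z\to[0,1]$ measurable, and $\sigma>0$ with $P[|f-f_0|]\le\sigma^2$ for all $f\in\mathcal F$. Set $\varphi(\sigma)=\int_0^\sigma(\log N_\infty(\mathcal F,\epsilon^2))^{1/2}d\epsilon$. If $4\varphi(\sigma)\le\sigma^2\sqrt{\|\mathbf w\|_1}$, then $$\sqrt{\|\mathbf w\|_1}\max\Big(\mathbb E\big[\sup_{f\in\mathcal F}v_{\mathbf w}(f_0-f)\big],\ \mathbb E\big[\sup_{f\in\mathcal F}v_{\mathbf w}(f-f_0)\big]\Big)\le12\varphi(\sigma).$$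
   Context: For a $P$-integrable $f$, $v_{\mathbf w}(f)=\frac1{\|\mathbf w\|_1}\sum_{i=1}^nw_if(\xi_i)-P(f)$. $N_\infty(\mathcal F,\epsilon)$ is the minimal number of sup-norm balls of radius $\epsilon$ centered in $\mathcal F$ needed to cover $\mathcal F$. *)

theory Defs
  imports "HOL-Probability.Probability"
begin

text \<open>It is \<infinity> if no finite cover exists.\<close>
definition sup_cover_num :: "'a measure \<Rightarrow> ('a \<Rightarrow> real) set \<Rightarrow> real \<Rightarrow> enat" where
  "sup_cover_num P F eps =
     (INF C \<in> {C. finite C \<and> C \<subseteq> F \<and>
                 (\<forall>f\<in>F. \<exists>g\<in>C. \<forall>z\<in>space P. \<bar>f z - g z\<bar> \<le> eps)}. enat (card C))"

definition sqrt_log_cover :: "'a measure \<Rightarrow> ('a \<Rightarrow> real) set \<Rightarrow> real \<Rightarrow> ennreal" where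
  "sqrt_log_cover P F eps =
     (case sup_cover_num P F eps of enat k \<Rightarrow> ennreal (sqrt (ln (real k))) | \<infinity> \<Rightarrow> \<infinity>)"

definition entropy_integral :: "'a measure \<Rightarrow> ('a \<Rightarrow> real) set \<Rightarrow> real \<Rightarrow> ennreal" where
  "entropy_integral P F \<sigma> =
     (\<integral>\<^sup>+ eps. indicator {0..\<sigma>} eps * sqrt_log_cover P F (eps\<^sup>2) \<partial>lborel)"

definition v_w :: "'a measure \<Rightarrow> nat \<Rightarrow> (nat \<Rightarrow> real) \<Rightarrow> (nat \<Rightarrow> 'b \<Rightarrow> 'a)
                     \<Rightarrow> ('a \<Rightarrow> real) \<Rightarrow> 'b \<Rightarrow> real" where
  "v_w P n w \<xi> g \<omega> =
     (\<Sum>i<n. w i * g (\<xi> i \<omega>)) / (\<Sum>i<n. w i) - (\<integral>z. g z \<partial>P)"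

end

theory Submission
  imports Defs
begin

text \<open>Chaining over dyadic sup-norm nets. With radii \<open>\<epsilon>\<^sub>s = \<sigma>/2\<^sup>s\<close> and minimal
  \<open>\<epsilon>\<^sub>s\<^sup>2\<close>-nets \<open>C\<^sub>s \<subseteq> F\<close>, every \<open>f \<in> C\<^sub>s\<^sub>+\<^sub>1\<close> is its projection onto \<open>C\<^sub>s\<close> plus a
  link of sup norm at most \<open>\<epsilon>\<^sub>s\<close>, and every \<open>f \<in> F\<close> is uniformly \<open>\<epsilon>\<^sub>S\<^sup>2\<close>-close to \<open>C\<^sub>S\<close>.
  Hence the supremum of the weighted process over \<open>F\<close> is at most its maximum over \<open>C\<^sub>0\<close>,
  plus the maxima over the links, plus \<open>2\<epsilon>\<^sub>S\<^sup>2\<close>. Each maximum over \<open>N\<close> variables whose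
  moment generating function is at most \<open>exp (\<lambda>\<^sup>2 A)\<close> has mean at most \<open>2\<surd>(A log N)\<close>:
  for the links Hoeffding's lemma gives \<open>A \<approx> \<epsilon>\<^sub>s\<^sup>2 \<parallel>w\<parallel>\<^sub>1\<close>; on \<open>C\<^sub>0\<close> the bound
  \<open>e\<^sup>x \<le> 1 + x + x\<^sup>2\<close> and \<open>P (f - f\<^sub>0)\<^sup>2 \<le> P |f - f\<^sub>0| \<le> \<sigma>\<^sup>2\<close> give \<open>A = \<sigma>\<^sup>2 \<parallel>w\<parallel>\<^sub>1\<close>,
  valid for \<open>\<lambda> \<le> 1\<close> only. Summing, the logarithmic terms form a Riemann sum of the entropy
  integral, so \<open>\<surd>\<parallel>w\<parallel>\<^sub>1 E sup \<le> 4\<surd>2 \<phi>(\<sigma>) + 2\<sigma>\<^sup>2 4\<^sup>-\<^sup>S \<surd>\<parallel>w\<parallel>\<^sub>1\<close>, and \<open>S \<rightarrow> \<infinity>\<close>.\<close>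

lemma exp_le_one_plus_square:
  fixes x :: real
  assumes "\<bar>x\<bar> \<le> 1"
  shows "exp x \<le> 1 + x + x\<^sup>2"
proof (cases "x \<ge> 0")
  case True
  then show ?thesis using exp_bound[of x] assms by auto
next
  case False
  have pos: "1 - x > 0" using False by simp
  have "exp x = 1 / exp (-x)" by (simp add: exp_minus field_simps)
  also have "\<dots> \<le> 1 / (1 - x)"
    using exp_ge_add_one_self[of "-x"] pos by (intro divide_left_mono) auto
  also have "\<dots> \<le> 1 + x + x\<^sup>2"
  proof -
    have "(1 + x + x\<^sup>2) * (1 - x) = 1 - x * x\<^sup>2" by (simp add: algebra_simps power2_eq_square)
    moreover have "x * x\<^sup>2 \<le> 0" using False by (simp add: mult_nonpos_nonneg)
    ultimately show ?thesis using pos by (simp add: divide_simps)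
  qed
  finally show ?thesis .
qed

lemma le_of_le_add_power:
  fixes y c d q :: real
  assumes d: "0 \<le> d" and q: "0 \<le> q" "q < 1" and le: "\<And>S::nat. y \<le> c + d * q ^ S"
  shows "y \<le> c"
proof (rule ccontr)
  assume "\<not> y \<le> c"
  then have pos: "(y - c) / (d + 1) > 0" using d by simp
  obtain S where S: "q ^ S < (y - c) / (d + 1)"
    using real_arch_pow_inv[OF pos q(2)] by blast
  have "d * q ^ S \<le> (d + 1) * q ^ S" using q by (intro mult_right_mono) auto
  also have "\<dots> < (d + 1) * ((y - c) / (d + 1))" using S d by (intro mult_strict_left_mono) auto
  also have "\<dots> = y - c" using d by simp
  finally show False using le[of S] by simp
qed

section \<open>Maxima of sub-Gaussian variables\<close>

context prob_space
begin

lemma expectation_Max_le_of_mgf: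
  fixes Z :: "'i \<Rightarrow> 'a \<Rightarrow> real"
  assumes fin: "finite J" and ne: "J \<noteq> {}"
    and meas: "\<And>j. j \<in> J \<Longrightarrow> Z j \<in> borel_measurable M"
    and bnd: "\<And>j \<omega>. j \<in> J \<Longrightarrow> \<omega> \<in> space M \<Longrightarrow> \<bar>Z j \<omega>\<bar> \<le> K"
    and l: "l > 0"
    and mgf: "\<And>j. j \<in> J \<Longrightarrow> (\<integral>\<omega>. exp (l * Z j \<omega>) \<partial>M) \<le> exp (l\<^sup>2 * A)"
  shows "l * (\<integral>\<omega>. Max ((\<lambda>j. Z j \<omega>) ` J) \<partial>M) \<le> ln (card J) + l\<^sup>2 * A"
proof -
  define c where "c = ln (card J) + l\<^sup>2 * A"
  define m where "m = (\<lambda>\<omega>. Max ((\<lambda>j. Z j \<omega>) ` J))"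
  have card_pos: "card J > 0" using fin ne by (simp add: card_gt_0_iff)
  have exp_c: "exp c = card J * exp (l\<^sup>2 * A)"
    using card_pos by (simp add: c_def exp_add)
  have m_attained: "\<exists>j\<in>J. m \<omega> = Z j \<omega>" for \<omega>
  proof -
    have "m \<omega> \<in> (\<lambda>j. Z j \<omega>) ` J" unfolding m_def using fin ne by (intro Max_in) auto
    then show ?thesis by (metis imageE)
  qed
  have int_m: "integrable M m"
  proof (rule integrable_const_bound[where B=K])
    show "AE \<omega> in M. norm (m \<omega>) \<le> K" using m_attained bnd by (intro AE_I2) (metis real_norm_def)
    show "m \<in> borel_measurable M" unfolding m_def using fin meas by (intro borel_measurable_Max) auto
  qed
  have int_exp: "integrable M (\<lambda>\<omega>. exp (l * Z j \<omega>))" if j: "j \<in> J" for j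
  proof (rule integrable_const_bound[where B="exp (l * K)"])
    show "AE x in M. norm (exp (l * Z j x)) \<le> exp (l * K)"
      using bnd[OF j] l by (intro AE_I2) (auto intro!: mult_left_mono simp: abs_le_iff)
  qed (use meas[OF j] in measurable)
  \<comment> \<open>\<open>t \<le> e\<^sup>t - 1\<close> at \<open>t = l m - c\<close>, then the maximum of the exponentials is bounded by their sum.\<close>
  have pointwise: "l * m \<omega> - c \<le> (\<Sum>j\<in>J. exp (l * Z j \<omega>)) / exp c - 1" for \<omega>
  proof -
    obtain j0 where j0: "j0 \<in> J" "m \<omega> = Z j0 \<omega>" using m_attained by blast
    have "l * m \<omega> - c \<le> exp (l * m \<omega> - c) - 1"
      using exp_ge_add_one_self[of "l * m \<omega> - c"] by linarith
    also have "exp (l * m \<omega> - c) = exp (l * Z j0 \<omega>) / exp c" using j0 by (simp add: exp_diff)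
    also have "\<dots> \<le> (\<Sum>j\<in>J. exp (l * Z j \<omega>)) / exp c"
      using j0 fin by (intro divide_right_mono member_le_sum) auto
    finally show ?thesis by simp
  qed
  have "l * (\<integral>\<omega>. m \<omega> \<partial>M) - c = (\<integral>\<omega>. l * m \<omega> - c \<partial>M)"
    using int_m by (simp add: prob_space)
  also have "\<dots> \<le> (\<integral>\<omega>. (\<Sum>j\<in>J. exp (l * Z j \<omega>)) / exp c - 1 \<partial>M)"
    using int_m int_exp pointwise by (intro integral_mono) auto
  also have "\<dots> = (\<Sum>j\<in>J. (\<integral>\<omega>. exp (l * Z j \<omega>) \<partial>M)) / exp c - 1"
    using int_exp by (simp add: prob_space)
  also have "\<dots> \<le> (\<Sum>j\<in>J. exp (l\<^sup>2 * A)) / exp c - 1"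
    using mgf by (intro diff_right_mono divide_right_mono sum_mono) auto
  also have "\<dots> = 0" using exp_c card_pos by simp
  finally show ?thesis unfolding m_def c_def by simp
qed

lemma expectation_Max_le_sqrt_ln_card:
  fixes Z :: "'i \<Rightarrow> 'a \<Rightarrow> real"
  assumes fin: "finite J" and ne: "J \<noteq> {}"
    and meas: "\<And>j. j \<in> J \<Longrightarrow> Z j \<in> borel_measurable M"
    and bnd: "\<And>j \<omega>. j \<in> J \<Longrightarrow> \<omega> \<in> space M \<Longrightarrow> \<bar>Z j \<omega>\<bar> \<le> K"
    and A: "A > 0" and \<Lambda>: "\<Lambda> > 0"
    and range: "sqrt (ln (card J) / A) \<le> \<Lambda>"
    and mgf: "\<And>l j. 0 < l \<Longrightarrow> l \<le> \<Lambda> \<Longrightarrow> j \<in> J \<Longrightarrow>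
                (\<integral>\<omega>. exp (l * Z j \<omega>) \<partial>M) \<le> exp (l\<^sup>2 * A)"
  shows "(\<integral>\<omega>. Max ((\<lambda>j. Z j \<omega>) ` J) \<partial>M) \<le> 2 * sqrt (ln (card J) * A)"
proof -
  define L where "L = ln (real (card J))"
  define E where "E = (\<integral>\<omega>. Max ((\<lambda>j. Z j \<omega>) ` J) \<partial>M)"
  have L_nonneg: "L \<ge> 0" unfolding L_def using fin ne by (simp add: Suc_le_eq card_gt_0_iff)
  have key: "l * E \<le> L + l\<^sup>2 * A" if "0 < l" "l \<le> \<Lambda>" for l
    unfolding E_def L_def using mgf that
    by (intro expectation_Max_le_of_mgf[OF fin ne meas bnd]) auto
  show ?thesis
  proof (cases "L = 0")
    case True
    have "E \<le> 0"
    proof (rule ccontr)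
      assume "\<not> E \<le> 0"
      define l where "l = min \<Lambda> (E / (2 * A))"
      have l: "l > 0" using \<Lambda> \<open>\<not> E \<le> 0\<close> A by (simp add: l_def)
      have "l * E \<le> l * (l * A)" using key[OF l] True by (simp add: l_def power2_eq_square algebra_simps)
      then have "E \<le> l * A" using l by simp
      also have "l * A \<le> E / 2" using A by (simp add: l_def min_def field_simps)
      finally show False using \<open>\<not> E \<le> 0\<close> by simp
    qed
    then show ?thesis using True unfolding E_def L_def by simp
  next
    case False
    then have L: "L > 0" using L_nonneg by simp
    define l where "l = sqrt (L / A)"
    have l: "l > 0" and l_sq: "l\<^sup>2 * A = L" using L A by (simp_all add: l_def)
    have l_sqrt: "l * sqrt (L * A) = L"
      using L A by (simp add: l_def flip: real_sqrt_mult)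
    have "l * E \<le> 2 * L" using key[OF l] range l_sq unfolding l_def L_def by simp
    also have "\<dots> = l * (2 * sqrt (L * A))" using l_sqrt by simp
    finally show ?thesis using l unfolding E_def L_def by simp
  qed
qed

lemma centred_mgf_le_hoeffding:
  fixes h :: "'a \<Rightarrow> real"
  assumes h: "h \<in> borel_measurable M" "\<And>z. z \<in> space M \<Longrightarrow> \<bar>h z\<bar> \<le> b"
    and w: "0 \<le> w" "w \<le> 1" and l: "l > 0"
  shows "(\<integral>\<^sup>+z. ennreal (exp (l * (w * (h z - (\<integral>z. h z \<partial>M))))) \<partial>M)
           \<le> ennreal (exp (l\<^sup>2 * w * b\<^sup>2 / 2))"
proof -
  interpret wh: interval_bounded_random_variable M "\<lambda>z. w * h z" "-(w * b)" "w * b"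
  proof unfold_locales
    show "random_variable borel (\<lambda>z. w * h z)" using h(1) by measurable
    have "\<bar>w * h z\<bar> \<le> w * b" if "z \<in> space M" for z
      using h(2)[OF that] w by (simp add: abs_mult mult_left_mono)
    then show "AE z in M. w * h z \<in> {- (w * b)..w * b}" by (intro AE_I2) (auto simp: abs_le_iff minus_le_iff)
  qed
  have "(\<integral>\<^sup>+z. ennreal (exp (l * (w * (h z - (\<integral>z. h z \<partial>M))))) \<partial>M)
      = (\<integral>\<^sup>+z. ennreal (exp (l * (w * h z - expectation (\<lambda>z. w * h z)))) \<partial>M)"
    by (simp add: right_diff_distrib)
  also have "\<dots> \<le> ennreal (exp (l\<^sup>2 * (w * b - - (w * b))\<^sup>2 / 8))"
    by (rule wh.Hoeffdings_lemma_nn_integral[OF l])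
  also have "\<dots> \<le> ennreal (exp (l\<^sup>2 * w * b\<^sup>2 / 2))"
  proof (intro ennreal_leI exp_mono)
    have "w\<^sup>2 \<le> w" using w by (simp add: power2_eq_square mult_left_le)
    then have "l\<^sup>2 * b\<^sup>2 * w\<^sup>2 / 2 \<le> l\<^sup>2 * b\<^sup>2 * w / 2" by (intro divide_right_mono mult_left_mono) auto
    then show "l\<^sup>2 * (w * b - - (w * b))\<^sup>2 / 8 \<le> l\<^sup>2 * w * b\<^sup>2 / 2"
      by (simp add: power2_eq_square algebra_simps)
  qed
  finally show ?thesis .
qed

text \<open>A Bernstein-type bound: for small \<open>l\<close> the second moment, not the range, controls the
  moment generating function. It is what makes the coarsest level of the chain cost only \<open>\<sigma>\<close>.\<close>

lemma centred_mgf_le_second_moment: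
  fixes h :: "'a \<Rightarrow> real"
  assumes h: "h \<in> borel_measurable M" "\<And>z. z \<in> space M \<Longrightarrow> \<bar>h z\<bar> \<le> 1"
    and V: "(\<integral>z. (h z)\<^sup>2 \<partial>M) \<le> V"
    and w: "0 \<le> w" "w \<le> 1" and l: "0 < l" "l \<le> 1"
  shows "(\<integral>\<^sup>+z. ennreal (exp (l * (w * (h z - (\<integral>z. h z \<partial>M))))) \<partial>M) \<le> ennreal (exp (l\<^sup>2 * w * V))"
proof -
  define m where "m = (\<integral>z. h z \<partial>M)"
  have int_h: "integrable M h" using h by (intro integrable_const_bound[where B=1]) auto
  have int_h2: "integrable M (\<lambda>z. (h z)\<^sup>2)"
    using h by (intro integrable_const_bound[where B=1]) (auto simp: abs_square_le_1)
  have small: "\<bar>l * w * h z\<bar> \<le> 1" if "z \<in> space M" for z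
  proof -
    have "\<bar>l * w * h z\<bar> = l * w * \<bar>h z\<bar>" using l w by (simp add: abs_mult)
    also have "\<dots> \<le> 1 * 1 * 1" using l w h(2)[OF that] by (intro mult_mono) auto
    finally show ?thesis by simp
  qed
  have int_exp: "integrable M (\<lambda>z. exp (l * w * h z))"
    using h small by (intro integrable_const_bound[where B="exp 1"]) (auto simp: abs_le_iff)
  have second_moment_nonneg: "0 \<le> (\<integral>z. (h z)\<^sup>2 \<partial>M)" by (simp add: integral_nonneg_AE)
  have "(\<integral>z. exp (l * w * h z) \<partial>M) \<le> (\<integral>z. 1 + l * w * h z + (l * w * h z)\<^sup>2 \<partial>M)"
  proof (rule integral_mono[OF int_exp])
    show "integrable M (\<lambda>z. 1 + l * w * h z + (l * w * h z)\<^sup>2)"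
      using int_h int_h2 by (simp add: power_mult_distrib)
  qed (use small exp_le_one_plus_square in blast)
  also have "\<dots> = 1 + l * w * m + (l * w)\<^sup>2 * (\<integral>z. (h z)\<^sup>2 \<partial>M)"
    using int_h int_h2 by (simp add: m_def power_mult_distrib prob_space)
  also have "\<dots> \<le> 1 + l * w * m + l\<^sup>2 * w * V"
  proof -
    have "w\<^sup>2 \<le> w" using w by (simp add: power2_eq_square mult_left_le)
    then have "w\<^sup>2 * (\<integral>z. (h z)\<^sup>2 \<partial>M) \<le> w * V"
      using V second_moment_nonneg w by (intro mult_mono) auto
    then have "(l * w)\<^sup>2 * (\<integral>z. (h z)\<^sup>2 \<partial>M) \<le> l\<^sup>2 * w * V"
      using mult_left_mono[of _ _ "l\<^sup>2"] by (simp add: power_mult_distrib mult.assoc)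
    then show ?thesis by simp
  qed
  also have "\<dots> \<le> exp (l * w * m + l\<^sup>2 * w * V)"
    using exp_ge_add_one_self[of "l * w * m + l\<^sup>2 * w * V"] by linarith
  finally have mgf: "(\<integral>z. exp (l * w * h z) \<partial>M) \<le> exp (l * w * m + l\<^sup>2 * w * V)" .
  have shift: "(\<lambda>z. exp (l * (w * (h z - m)))) = (\<lambda>z. exp (- (l * w * m)) * exp (l * w * h z))"
    by (simp add: algebra_simps fun_eq_iff flip: exp_add)
  have "(\<integral>\<^sup>+z. ennreal (exp (l * (w * (h z - m)))) \<partial>M) = ennreal (\<integral>z. exp (l * (w * (h z - m))) \<partial>M)"
    using int_exp by (intro nn_integral_eq_integral) (auto simp: shift)
  also have "(\<integral>z. exp (l * (w * (h z - m))) \<partial>M) = exp (- (l * w * m)) * (\<integral>z. exp (l * w * h z) \<partial>M)"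
    unfolding shift by simp
  also have "\<dots> \<le> exp (- (l * w * m)) * exp (l * w * m + l\<^sup>2 * w * V)"
    using mgf by (rule mult_left_mono) simp
  also have "\<dots> = exp (l\<^sup>2 * w * V)" by (simp flip: exp_add)
  finally show ?thesis unfolding m_def by (simp add: ennreal_leI)
qed

end

section \<open>Weighted sums of an i.i.d. sample\<close>

locale weighted_iid_sample = prob_space M
  for M :: "'b measure" and P :: "'a measure" and n :: nat and w :: "nat \<Rightarrow> real"
    and \<xi> :: "nat \<Rightarrow> 'b \<Rightarrow> 'a" +
  assumes \<xi>_meas: "\<And>i. i < n \<Longrightarrow> \<xi> i \<in> measurable M P"
    and \<xi>_indep: "indep_vars (\<lambda>_. P) \<xi> {..<n}"
    and \<xi>_law: "\<And>i. i < n \<Longrightarrow> distr M P (\<xi> i) = P"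
    and w_range: "\<And>i. i < n \<Longrightarrow> 0 \<le> w i \<and> w i \<le> 1"
    and weight_pos: "(\<Sum>i<n. w i) > 0"
begin

abbreviation W :: real where "W \<equiv> \<Sum>i<n. w i"

definition centred_sum :: "('a \<Rightarrow> real) \<Rightarrow> 'b \<Rightarrow> real" where
  "centred_sum h \<omega> = (\<Sum>i<n. w i * (h (\<xi> i \<omega>) - (\<integral>z. h z \<partial>P)))"

lemma prob_space_P: "prob_space P"
proof -
  have "n > 0" using weight_pos by (cases n) auto
  then show ?thesis using prob_space_distr[OF \<xi>_meas] \<xi>_law by metis
qed

sublocale P: prob_space P by (rule prob_space_P)

lemma v_w_eq_centred_sum: "v_w P n w \<xi> h \<omega> = centred_sum h \<omega> / W"
proof -
  have "centred_sum h \<omega> = (\<Sum>i<n. w i * h (\<xi> i \<omega>)) - W * (\<integral>z. h z \<partial>P)"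
    unfolding centred_sum_def by (simp add: right_diff_distrib sum_subtractf sum_distrib_right)
  then show ?thesis using weight_pos unfolding v_w_def by (simp add: field_simps)
qed

lemma centred_sum_measurable:
  assumes "h \<in> borel_measurable P"
  shows "centred_sum h \<in> borel_measurable M"
proof -
  have "(\<lambda>\<omega>. w i * (h (\<xi> i \<omega>) - (\<integral>z. h z \<partial>P))) \<in> borel_measurable M" if "i < n" for i
    using measurable_compose[OF \<xi>_meas[OF that] assms] by measurable
  then show ?thesis unfolding centred_sum_def by (intro borel_measurable_sum) auto
qed

lemma abs_centred_sum_le:
  assumes h: "h \<in> borel_measurable P" "\<And>z. z \<in> space P \<Longrightarrow> \<bar>h z\<bar> \<le> B" and \<omega>: "\<omega> \<in> space M"
  shows "\<bar>centred_sum h \<omega>\<bar> \<le> 2 * B * W"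
proof -
  have mean: "\<bar>\<integral>z. h z \<partial>P\<bar> \<le> B"
  proof -
    have "integrable P (\<lambda>z. \<bar>h z\<bar>)" using h by (intro P.integrable_const_bound[where B=B]) auto
    then have "(\<integral>z. \<bar>h z\<bar> \<partial>P) \<le> B" using h(2) by (intro P.integral_le_const AE_I2) auto
    then show ?thesis using integral_abs_bound[of P h] by linarith
  qed
  have "\<bar>centred_sum h \<omega>\<bar> \<le> (\<Sum>i<n. \<bar>w i * (h (\<xi> i \<omega>) - (\<integral>z. h z \<partial>P))\<bar>)"
    unfolding centred_sum_def by (rule sum_abs)
  also have "\<dots> \<le> (\<Sum>i<n. w i * (2 * B))"
  proof (rule sum_mono)
    fix i assume i: "i \<in> {..<n}"
    have "\<xi> i \<omega> \<in> space P" using \<xi>_meas[of i] i \<omega> by (auto simp: measurable_def)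
    then have "\<bar>h (\<xi> i \<omega>) - (\<integral>z. h z \<partial>P)\<bar> \<le> 2 * B" using h(2) mean by fastforce
    then show "\<bar>w i * (h (\<xi> i \<omega>) - (\<integral>z. h z \<partial>P))\<bar> \<le> w i * (2 * B)"
      using w_range[of i] i by (simp add: abs_mult mult_left_mono)
  qed
  also have "\<dots> = 2 * B * W" by (simp add: sum_distrib_left sum_distrib_right mult_ac)
  finally show ?thesis .
qed

lemma centred_sum_add:
  assumes "integrable P h1" "integrable P h2"
  shows "centred_sum (\<lambda>z. h1 z + h2 z) \<omega> = centred_sum h1 \<omega> + centred_sum h2 \<omega>"
  unfolding centred_sum_def using assms by (simp add: sum.distrib[symmetric] algebra_simps)

lemma centred_sum_mgf_le:
  assumes h: "h \<in> borel_measurable P" "\<And>z. z \<in> space P \<Longrightarrow> \<bar>h z\<bar> \<le> B"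
    and coord: "\<And>i. i < n \<Longrightarrow>
      (\<integral>\<^sup>+z. ennreal (exp (l * (w i * (h z - (\<integral>z. h z \<partial>P))))) \<partial>P) \<le> ennreal (exp (c i))"
  shows "(\<integral>\<omega>. exp (l * centred_sum h \<omega>) \<partial>M) \<le> exp (\<Sum>i<n. c i)"
proof -
  define Y where "Y = (\<lambda>i z. ennreal (exp (l * (w i * (h z - (\<integral>z. h z \<partial>P))))))"
  have Y_meas: "Y i \<in> borel_measurable P" for i unfolding Y_def using h(1) by measurable
  have int_exp: "integrable M (\<lambda>\<omega>. exp (l * centred_sum h \<omega>))"
  proof (rule integrable_const_bound[where B="exp (\<bar>l\<bar> * (2 * B * W))"])
    have "l * centred_sum h \<omega> \<le> \<bar>l\<bar> * (2 * B * W)" if "\<omega> \<in> space M" for \<omega>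
    proof -
      have "l * centred_sum h \<omega> \<le> \<bar>l\<bar> * \<bar>centred_sum h \<omega>\<bar>" by (simp flip: abs_mult)
      also have "\<dots> \<le> \<bar>l\<bar> * (2 * B * W)" using abs_centred_sum_le[OF h that] by (intro mult_left_mono) auto
      finally show ?thesis .
    qed
    then show "AE \<omega> in M. norm (exp (l * centred_sum h \<omega>)) \<le> exp (\<bar>l\<bar> * (2 * B * W))"
      by (intro AE_I2) simp
  qed (use centred_sum_measurable[OF h(1)] in measurable)
  have "ennreal (\<integral>\<omega>. exp (l * centred_sum h \<omega>) \<partial>M) = (\<integral>\<^sup>+\<omega>. exp (l * centred_sum h \<omega>) \<partial>M)"
    using int_exp by (intro nn_integral_eq_integral[symmetric]) auto
  also have "\<dots> = (\<integral>\<^sup>+\<omega>. (\<Prod>i<n. Y i (\<xi> i \<omega>)) \<partial>M)"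
    by (simp add: Y_def centred_sum_def sum_distrib_left exp_sum prod_ennreal)
  also have "\<dots> = (\<Prod>i<n. \<integral>\<^sup>+\<omega>. Y i (\<xi> i \<omega>) \<partial>M)"
    using Y_meas by (intro indep_vars_nn_integral indep_vars_compose2[OF \<xi>_indep]) auto
  also have "\<dots> = (\<Prod>i<n. \<integral>\<^sup>+z. Y i z \<partial>P)"
  proof (rule prod.cong[OF refl])
    fix i assume i: "i \<in> {..<n}"
    have "(\<integral>\<^sup>+z. Y i z \<partial>distr M P (\<xi> i)) = (\<integral>\<^sup>+\<omega>. Y i (\<xi> i \<omega>) \<partial>M)"
      using i Y_meas by (intro nn_integral_distr \<xi>_meas) auto
    then show "(\<integral>\<^sup>+\<omega>. Y i (\<xi> i \<omega>) \<partial>M) = (\<integral>\<^sup>+z. Y i z \<partial>P)" using \<xi>_law i by simp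
  qed
  also have "\<dots> \<le> (\<Prod>i<n. ennreal (exp (c i)))"
    using coord by (intro prod_mono_ennreal) (simp add: Y_def)
  also have "\<dots> = ennreal (exp (\<Sum>i<n. c i))"
    by (simp add: prod_ennreal exp_sum)
  finally show ?thesis by (simp add: ennreal_le_iff2)
qed

end

section \<open>Sup-norm covering numbers and the entropy integral\<close>

definition sup_cover :: "'a measure \<Rightarrow> ('a \<Rightarrow> real) set \<Rightarrow> real \<Rightarrow> ('a \<Rightarrow> real) set \<Rightarrow> bool" where
  "sup_cover P F d C \<longleftrightarrow> finite C \<and> C \<subseteq> F \<and> (\<forall>f\<in>F. \<exists>g\<in>C. \<forall>z\<in>space P. \<bar>f z - g z\<bar> \<le> d)"

lemma sup_cover_num_eq_INF: "sup_cover_num P F d = (INF C \<in> Collect (sup_cover P F d). enat (card C))"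
  unfolding sup_cover_num_def sup_cover_def by simp

lemma sup_cover_mono: "sup_cover P F d C \<Longrightarrow> d \<le> d' \<Longrightarrow> sup_cover P F d' C"
  unfolding sup_cover_def by (meson order_trans)

lemma sup_cover_num_antimono: "d \<le> d' \<Longrightarrow> sup_cover_num P F d' \<le> sup_cover_num P F d"
  unfolding sup_cover_num_eq_INF by (intro INF_superset_mono) (auto intro: sup_cover_mono)

lemma sup_cover_num_attained:
  assumes "sup_cover_num P F d \<noteq> \<infinity>"
  obtains C where "sup_cover P F d C" "enat (card C) = sup_cover_num P F d"
proof -
  have "Collect (sup_cover P F d) \<noteq> {}"
  proof
    assume "Collect (sup_cover P F d) = {}"
    then have "sup_cover_num P F d = \<infinity>"
      unfolding sup_cover_num_eq_INF by (simp only: image_empty Inf_empty) (simp add: top_enat_def)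
    then show False using assms by simp
  qed
  then obtain C0 where "sup_cover P F d C0" by auto
  then have "sup_cover_num P F d \<in> (\<lambda>C. enat (card C)) ` Collect (sup_cover P F d)"
    unfolding sup_cover_num_eq_INF by (intro wellorder_InfI[of "enat (card C0)"]) auto
  then show ?thesis using that by auto
qed

lemma sqrt_log_cover_antimono:
  assumes "d \<le> d'"
  shows "sqrt_log_cover P F d' \<le> sqrt_log_cover P F d"
proof (cases "sup_cover_num P F d")
  case (enat k)
  then obtain k' where k': "sup_cover_num P F d' = enat k'" "k' \<le> k"
    using sup_cover_num_antimono[OF assms, of P F] by (cases "sup_cover_num P F d'") auto
  have "ln (real k') \<le> ln (real k)"
    using k'(2) by (cases "k' = 0"; cases "k = 0") auto
  then show ?thesis unfolding sqrt_log_cover_def using enat k' by (simp add: ennreal_leI)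
qed (simp add: sqrt_log_cover_def)

lemma entropy_integral_mono: "\<sigma> \<le> \<sigma>' \<Longrightarrow> entropy_integral P F \<sigma> \<le> entropy_integral P F \<sigma>'"
  unfolding entropy_integral_def
  by (intro nn_integral_mono mult_right_mono) (auto split: split_indicator)

lemma dyadic_sum_le_nn_integral_antimono:
  fixes g :: "real \<Rightarrow> ennreal"
  assumes g: "\<And>x y. 0 < x \<Longrightarrow> x \<le> y \<Longrightarrow> g y \<le> g x" and \<sigma>: "0 < \<sigma>"
  shows "(\<Sum>s<S. ennreal (\<sigma> / 2 ^ Suc s) * g (\<sigma> / 2 ^ s))
           \<le> (\<integral>\<^sup>+x. indicator {0..\<sigma>} x * g x \<partial>lborel)"
proof -
  define e where "e = (\<lambda>s::nat. \<sigma> / 2 ^ s)"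
  define I where "I = (\<lambda>s. {e (Suc s)<..e s})"
  have e_pos: "e s > 0" for s using \<sigma> by (simp add: e_def)
  have e_antimono: "e t \<le> e s" if "s \<le> t" for s t
    using \<sigma> that unfolding e_def by (intro divide_left_mono power_increasing) auto
  have I_disjoint: "x \<notin> I t" if "x \<in> I s" "s < t" for x s t
    using that e_antimono[of "Suc s" t] unfolding I_def by auto
  have I_sub: "I s \<subseteq> {0..\<sigma>}" for s
    using e_pos[of "Suc s"] e_antimono[of 0 s] unfolding I_def by (auto simp: e_def)
  have "(\<Sum>s<S. ennreal (\<sigma> / 2 ^ Suc s) * g (e s)) = (\<Sum>s<S. g (e s) * emeasure lborel (I s))"
  proof (intro sum.cong refl)
    fix s
    have "e (Suc s) \<le> e s" using e_antimono by simp
    moreover have "e s - e (Suc s) = \<sigma> / 2 ^ Suc s" by (simp add: e_def field_simps)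
    ultimately show "ennreal (\<sigma> / 2 ^ Suc s) * g (e s) = g (e s) * emeasure lborel (I s)"
      unfolding I_def by (simp add: mult.commute)
  qed
  also have "\<dots> = (\<integral>\<^sup>+x. (\<Sum>s<S. g (e s) * indicator (I s) x) \<partial>lborel)"
    by (subst nn_integral_sum) (auto simp: I_def nn_integral_cmult_indicator)
  also have "\<dots> \<le> (\<integral>\<^sup>+x. indicator {0..\<sigma>} x * g x \<partial>lborel)"
  proof (rule nn_integral_mono)
    fix x :: real
    show "(\<Sum>s<S. g (e s) * indicator (I s) x) \<le> indicator {0..\<sigma>} x * g x"
    proof (cases "\<exists>s0<S. x \<in> I s0")
      case True
      then obtain s0 where s0: "s0 < S" "x \<in> I s0" by auto
      have "(\<Sum>s<S. g (e s) * indicator (I s) x) = g (e s0)"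
        using s0 I_disjoint by (subst sum.remove[of _ s0]) (auto intro!: sum.neutral simp: nat_neq_iff)
      also have "\<dots> \<le> g x" using s0(2) e_pos[of "Suc s0"] unfolding I_def by (intro g) auto
      also have "\<dots> = indicator {0..\<sigma>} x * g x" using s0(2) I_sub[of s0] by (simp add: subset_iff)
      finally show ?thesis .
    qed (auto intro!: sum.neutral)
  qed
  finally show ?thesis unfolding e_def .
qed

lemma sqrt_log_cover_sq_antimono:
  "0 < x \<Longrightarrow> x \<le> y \<Longrightarrow> sqrt_log_cover P F (y\<^sup>2) \<le> sqrt_log_cover P F (x\<^sup>2)"
  by (intro sqrt_log_cover_antimono power_mono) auto

lemma sup_cover_num_finite:
  assumes fin: "entropy_integral P F \<sigma> < \<infinity>" and e: "0 < e" "e \<le> \<sigma>"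
  shows "sup_cover_num P F (e\<^sup>2) \<noteq> \<infinity>"
proof
  assume "sup_cover_num P F (e\<^sup>2) = \<infinity>"
  then have "ennreal (e / 2) * sqrt_log_cover P F (e\<^sup>2) = \<infinity>"
    using e by (simp add: sqrt_log_cover_def ennreal_mult_top)
  moreover have "ennreal (e / 2) * sqrt_log_cover P F (e\<^sup>2) \<le> entropy_integral P F e"
    using dyadic_sum_le_nn_integral_antimono[where g="\<lambda>x. sqrt_log_cover P F (x\<^sup>2)" and S=1,
        OF sqrt_log_cover_sq_antimono e(1)]
    unfolding entropy_integral_def by simp
  moreover have "entropy_integral P F e \<le> entropy_integral P F \<sigma>"
    using e(2) by (rule entropy_integral_mono)
  ultimately show False using fin by (simp add: top_unique)
qed

section \<open>Chaining\<close>

lemma abs_Max_image_le: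
  fixes Z :: "'i \<Rightarrow> real"
  assumes "finite J" "J \<noteq> {}" "\<And>j. j \<in> J \<Longrightarrow> \<bar>Z j\<bar> \<le> K"
  shows "\<bar>Max (Z ` J)\<bar> \<le> K"
proof -
  have "Max (Z ` J) \<in> Z ` J" using assms by (intro Max_in) auto
  then show ?thesis using assms(3) by auto
qed

text \<open>The sign \<open>sg = \<plusminus>1\<close> handles the processes indexed by \<open>f - f\<^sub>0\<close> and by \<open>f\<^sub>0 - f\<close> at once.\<close>

locale chaining = weighted_iid_sample M P n w \<xi>
  for M :: "'b measure" and P :: "'a measure" and n w \<xi> +
  fixes F :: "('a \<Rightarrow> real) set" and f0 :: "'a \<Rightarrow> real" and \<sigma> sg :: real
  assumes F_count: "countable F" and F_ne: "F \<noteq> {}"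
    and F_meas: "\<And>f. f \<in> F \<Longrightarrow> f \<in> borel_measurable P"
    and F_range: "\<And>f z. f \<in> F \<Longrightarrow> z \<in> space P \<Longrightarrow> 0 \<le> f z \<and> f z \<le> 1"
    and f0_meas: "f0 \<in> borel_measurable P"
    and f0_range: "\<And>z. z \<in> space P \<Longrightarrow> 0 \<le> f0 z \<and> f0 z \<le> 1"
    and \<sigma>_pos: "\<sigma> > 0"
    and F_var: "\<And>f. f \<in> F \<Longrightarrow> (\<integral>z. \<bar>f z - f0 z\<bar> \<partial>P) \<le> \<sigma>\<^sup>2"
    and entropy_cond: "4 * entropy_integral P F \<sigma> \<le> ennreal (\<sigma>\<^sup>2 * sqrt W)"
    and sg: "\<bar>sg\<bar> = 1"
begin

definition \<phi> :: real where "\<phi> = enn2real (entropy_integral P F \<sigma>)"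

definition radius :: "nat \<Rightarrow> real" where "radius s = \<sigma> / 2 ^ s"

definition net :: "nat \<Rightarrow> ('a \<Rightarrow> real) set" where
  "net s = (SOME C. sup_cover P F ((radius s)\<^sup>2) C \<and> enat (card C) = sup_cover_num P F ((radius s)\<^sup>2))"

definition proj :: "nat \<Rightarrow> ('a \<Rightarrow> real) \<Rightarrow> 'a \<Rightarrow> real" where
  "proj s f = (SOME g. g \<in> net s \<and> (\<forall>z\<in>space P. \<bar>f z - g z\<bar> \<le> (radius s)\<^sup>2))"

definition dev :: "('a \<Rightarrow> real) \<Rightarrow> 'a \<Rightarrow> real" where "dev g z = sg * (g z - f0 z)"

definition link :: "nat \<Rightarrow> ('a \<Rightarrow> real) \<Rightarrow> 'a \<Rightarrow> real" where "link s g z = sg * (g z - proj s g z)"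

definition max_dev :: "nat \<Rightarrow> 'b \<Rightarrow> real" where
  "max_dev s \<omega> = Max ((\<lambda>g. centred_sum (dev g) \<omega>) ` net s)"

definition max_link :: "nat \<Rightarrow> 'b \<Rightarrow> real" where
  "max_link t \<omega> = Max ((\<lambda>g. centred_sum (link t g) \<omega>) ` net (Suc t))"

lemma entropy_integral_finite: "entropy_integral P F \<sigma> < \<infinity>"
proof (rule ccontr)
  assume "\<not> entropy_integral P F \<sigma> < \<infinity>"
  then have "entropy_integral P F \<sigma> = \<infinity>" by (simp add: top_unique not_less)
  then show False using entropy_cond by (simp add: ennreal_mult_top top_unique)
qed

lemma entropy_integral_eq: "entropy_integral P F \<sigma> = ennreal \<phi>"
  unfolding \<phi>_def using entropy_integral_finite by (simp add: ennreal_enn2real_if)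

lemma \<phi>_nonneg: "\<phi> \<ge> 0" unfolding \<phi>_def by simp

lemma \<phi>_le: "4 * \<phi> \<le> \<sigma>\<^sup>2 * sqrt W"
proof -
  have "ennreal (4 * \<phi>) \<le> ennreal (\<sigma>\<^sup>2 * sqrt W)"
    using entropy_cond \<phi>_nonneg by (simp add: entropy_integral_eq ennreal_mult)
  then show ?thesis using weight_pos by (simp add: ennreal_le_iff)
qed

lemma radius_pos: "radius s > 0" using \<sigma>_pos by (simp add: radius_def)

lemma radius_le: "radius s \<le> \<sigma>" using \<sigma>_pos by (simp add: radius_def divide_le_eq)

lemma radius_Suc: "radius s = 2 * radius (Suc s)" by (simp add: radius_def)

lemma radius_sq: "(radius s)\<^sup>2 = \<sigma>\<^sup>2 * (1/4) ^ s"
proof -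
  have "(2::real) ^ s * 2 ^ s = 4 ^ s" by (simp flip: power_mult_distrib)
  then show ?thesis by (simp add: radius_def power2_eq_square power_one_over)
qed

lemma net_min_cover:
  "sup_cover P F ((radius s)\<^sup>2) (net s) \<and> enat (card (net s)) = sup_cover_num P F ((radius s)\<^sup>2)"
  unfolding net_def
  by (rule someI_ex, rule sup_cover_num_attained)
     (use sup_cover_num_finite[OF entropy_integral_finite radius_pos radius_le] in auto)

lemma net_finite: "finite (net s)"
  and net_subset: "net s \<subseteq> F"
  and net_covers: "f \<in> F \<Longrightarrow> \<exists>g\<in>net s. \<forall>z\<in>space P. \<bar>f z - g z\<bar> \<le> (radius s)\<^sup>2"
  using net_min_cover[of s] unfolding sup_cover_def by auto

lemma net_nonempty: "net s \<noteq> {}"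
  using net_covers F_ne by blast

lemma ln_card_net_nonneg: "0 \<le> ln (card (net s))"
  using net_finite net_nonempty by (simp add: card_gt_0_iff Suc_le_eq)

lemma sqrt_log_cover_radius: "sqrt_log_cover P F ((radius s)\<^sup>2) = ennreal (sqrt (ln (card (net s))))"
  unfolding sqrt_log_cover_def using net_min_cover[of s] by (simp flip: net_min_cover)

lemma dyadic_entropy_sum_le: "(\<Sum>s<S. radius s / 2 * sqrt (ln (card (net s)))) \<le> \<phi>"
proof -
  have "ennreal (\<Sum>s<S. radius s / 2 * sqrt (ln (card (net s))))
      = (\<Sum>s<S. ennreal (radius s / 2 * sqrt (ln (card (net s)))))"
  proof (intro sum_ennreal[symmetric])
    show "0 \<le> radius s / 2 * sqrt (ln (card (net s)))" for s
      using radius_pos[of s] ln_card_net_nonneg[of s] by simp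
  qed
  also have "\<dots> = (\<Sum>s<S. ennreal (\<sigma> / 2 ^ Suc s) * sqrt_log_cover P F ((\<sigma> / 2 ^ s)\<^sup>2))"
  proof (intro sum.cong refl)
    fix s
    have "radius s / 2 = \<sigma> / 2 ^ Suc s" by (simp add: radius_def)
    then have "ennreal (radius s / 2 * sqrt (ln (card (net s))))
        = ennreal (\<sigma> / 2 ^ Suc s) * ennreal (sqrt (ln (card (net s))))"
      using \<sigma>_pos ln_card_net_nonneg[of s] by (simp only:) (intro ennreal_mult; simp)
    then show "ennreal (radius s / 2 * sqrt (ln (card (net s))))
        = ennreal (\<sigma> / 2 ^ Suc s) * sqrt_log_cover P F ((\<sigma> / 2 ^ s)\<^sup>2)"
      using sqrt_log_cover_radius[of s] by (simp add: radius_def)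
  qed
  also have "\<dots> \<le> entropy_integral P F \<sigma>"
    unfolding entropy_integral_def
    by (rule dyadic_sum_le_nn_integral_antimono[OF sqrt_log_cover_sq_antimono \<sigma>_pos])
  finally show ?thesis using \<phi>_nonneg by (simp add: entropy_integral_eq ennreal_le_iff)
qed

lemma ln_card_net0_le: "ln (card (net 0)) \<le> \<sigma>\<^sup>2 * W"
proof -
  have "\<sigma> / 2 * sqrt (ln (card (net 0))) \<le> \<phi>"
    using dyadic_entropy_sum_le[of 1] by (simp add: radius_def)
  then have "\<sigma> * sqrt (ln (card (net 0))) \<le> \<sigma> * (\<sigma> * sqrt W / 2)"
    using \<phi>_le by (simp add: power2_eq_square)
  then have root: "sqrt (ln (card (net 0))) \<le> \<sigma> * sqrt W / 2"
    using \<sigma>_pos by simp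
  have "ln (card (net 0)) = (sqrt (ln (card (net 0))))\<^sup>2"
    using ln_card_net_nonneg[of 0] by simp
  also have "\<dots> \<le> (\<sigma> * sqrt W / 2)\<^sup>2"
    using root ln_card_net_nonneg[of 0] by (intro power_mono) auto
  also have "\<dots> \<le> \<sigma>\<^sup>2 * W" using weight_pos by (simp add: power_mult_distrib power_divide)
  finally show ?thesis .
qed

lemma proj_props:
  assumes "f \<in> F"
  shows "proj s f \<in> net s" "\<And>z. z \<in> space P \<Longrightarrow> \<bar>f z - proj s f z\<bar> \<le> (radius s)\<^sup>2"
  using someI_ex[OF net_covers[OF assms, of s, unfolded Bex_def]] unfolding proj_def by auto

lemma proj_in_F: "f \<in> F \<Longrightarrow> proj s f \<in> F"
  using proj_props net_subset by blast

lemma dev_measurable: "g \<in> F \<Longrightarrow> dev g \<in> borel_measurable P"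
  unfolding dev_def[abs_def] using F_meas f0_meas by measurable

lemma abs_dev_le: "g \<in> F \<Longrightarrow> z \<in> space P \<Longrightarrow> \<bar>dev g z\<bar> \<le> 1"
  unfolding dev_def using F_range[of g z] f0_range[of z] sg by (simp add: abs_mult abs_le_iff)

text \<open>Functions in \<open>[0, 1]\<close> satisfy \<open>(f - f\<^sub>0)\<^sup>2 \<le> |f - f\<^sub>0|\<close>, so the \<open>L\<^sup>1\<close> bound on \<open>F\<close> is an \<open>L\<^sup>2\<close> bound.\<close>

lemma dev_second_moment_le:
  assumes g: "g \<in> F"
  shows "(\<integral>z. (dev g z)\<^sup>2 \<partial>P) \<le> \<sigma>\<^sup>2"
proof -
  have close: "\<bar>g z - f0 z\<bar> \<le> 1" if "z \<in> space P" for z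
    using F_range[OF g that] f0_range[OF that] by (simp add: abs_le_iff)
  have "(\<integral>z. (dev g z)\<^sup>2 \<partial>P) \<le> (\<integral>z. \<bar>g z - f0 z\<bar> \<partial>P)"
  proof (rule integral_mono)
    show "integrable P (\<lambda>z. (dev g z)\<^sup>2)"
      using dev_measurable[OF g] abs_dev_le[OF g]
      by (intro P.integrable_const_bound[where B=1]) (auto simp: abs_square_le_1)
    show "integrable P (\<lambda>z. \<bar>g z - f0 z\<bar>)"
      using F_meas[OF g] f0_meas close by (intro P.integrable_const_bound[where B=1]) auto
    fix z assume z: "z \<in> space P"
    have "(dev g z)\<^sup>2 = \<bar>g z - f0 z\<bar> * \<bar>g z - f0 z\<bar>"
      using sg power2_abs[of sg] by (simp add: dev_def power_mult_distrib power2_eq_square)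
    also have "\<dots> \<le> \<bar>g z - f0 z\<bar>" using close[OF z] by (intro mult_left_le) auto
    finally show "(dev g z)\<^sup>2 \<le> \<bar>g z - f0 z\<bar>" .
  qed
  then show ?thesis using F_var[OF g] by linarith
qed

lemma link_measurable: "g \<in> F \<Longrightarrow> link s g \<in> borel_measurable P"
  unfolding link_def[abs_def] using F_meas proj_in_F by measurable

lemma abs_link_le_sq: "g \<in> F \<Longrightarrow> z \<in> space P \<Longrightarrow> \<bar>link s g z\<bar> \<le> (radius s)\<^sup>2"
  unfolding link_def using proj_props sg by (simp add: abs_mult)

lemma abs_link_le:
  assumes "g \<in> F" "z \<in> space P"
  shows "\<bar>link s g z\<bar> \<le> radius s"
proof (cases "radius s \<le> 1")
  case True
  then have "(radius s)\<^sup>2 \<le> radius s" using radius_pos[of s] by (simp add: power2_eq_square mult_left_le)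
  then show ?thesis using abs_link_le_sq[OF assms, where s=s] by linarith
next
  case False
  have "\<bar>link s g z\<bar> \<le> 1"
    using F_range[OF assms] F_range[OF proj_in_F[OF assms(1), where s=s] assms(2)] sg
    by (simp add: link_def abs_mult abs_le_iff)
  then show ?thesis using False by linarith
qed

lemma centred_sum_dev_split:
  assumes "g \<in> F"
  shows "centred_sum (dev g) \<omega> = centred_sum (dev (proj s g)) \<omega> + centred_sum (link s g) \<omega>"
proof -
  have "dev g = (\<lambda>z. dev (proj s g) z + link s g z)"
    by (simp add: dev_def link_def fun_eq_iff algebra_simps)
  moreover have "integrable P (dev (proj s g))"
    using assms proj_in_F abs_dev_le dev_measurable by (intro P.integrable_const_bound[where B=1]) auto
  moreover have "integrable P (link s g)"
    using assms abs_link_le link_measurable by (intro P.integrable_const_bound[where B="radius s"]) auto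
  ultimately show ?thesis by (simp add: centred_sum_add)
qed

lemma integrable_max_dev: "integrable M (max_dev s)"
proof (rule integrable_const_bound[where B="2 * W"])
  show "max_dev s \<in> borel_measurable M"
    unfolding max_dev_def[abs_def] using net_finite net_subset
    by (intro borel_measurable_Max centred_sum_measurable dev_measurable) auto
  have "\<bar>max_dev s \<omega>\<bar> \<le> 2 * W" if "\<omega> \<in> space M" for \<omega>
    unfolding max_dev_def using net_finite net_nonempty net_subset that
    by (intro abs_Max_image_le) (auto intro!: abs_centred_sum_le[where B=1, simplified]
        dev_measurable abs_dev_le)
  then show "AE \<omega> in M. norm (max_dev s \<omega>) \<le> 2 * W" by auto
qed

lemma integrable_max_link: "integrable M (max_link t)"
proof (rule integrable_const_bound[where B="2 * radius t * W"])
  show "max_link t \<in> borel_measurable M"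
    unfolding max_link_def[abs_def] using net_finite net_subset
    by (intro borel_measurable_Max centred_sum_measurable link_measurable) auto
  have "\<bar>max_link t \<omega>\<bar> \<le> 2 * radius t * W" if "\<omega> \<in> space M" for \<omega>
    unfolding max_link_def using net_finite net_nonempty net_subset that
    by (intro abs_Max_image_le) (auto intro!: abs_centred_sum_le link_measurable abs_link_le)
  then show "AE \<omega> in M. norm (max_link t \<omega>) \<le> 2 * radius t * W" by auto
qed

lemma max_dev_Suc_le: "max_dev (Suc t) \<omega> \<le> max_dev t \<omega> + max_link t \<omega>"
  unfolding max_dev_def[of "Suc t"]
proof (rule Max.boundedI)
  fix x assume "x \<in> (\<lambda>g. centred_sum (dev g) \<omega>) ` net (Suc t)"
  then obtain g where g: "g \<in> net (Suc t)" "x = centred_sum (dev g) \<omega>" by auto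
  then have "x = centred_sum (dev (proj t g)) \<omega> + centred_sum (link t g) \<omega>"
    using net_subset by (auto intro: centred_sum_dev_split)
  also have "centred_sum (dev (proj t g)) \<omega> \<le> max_dev t \<omega>"
  proof -
    have "proj t g \<in> net t" using g net_subset proj_props(1) by blast
    then show ?thesis unfolding max_dev_def using net_finite by (intro Max_ge) auto
  qed
  also have "centred_sum (link t g) \<omega> \<le> max_link t \<omega>"
    unfolding max_link_def using g net_finite by (intro Max_ge) auto
  finally show "x \<le> max_dev t \<omega> + max_link t \<omega>" by simp
qed (use net_finite net_nonempty in auto)

lemma centred_sum_dev_le_chain:
  assumes f: "f \<in> F" and \<omega>: "\<omega> \<in> space M"
  shows "centred_sum (dev f) \<omega> \<le> max_dev 0 \<omega> + (\<Sum>t<S. max_link t \<omega>) + 2 * (radius S)\<^sup>2 * W"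
proof -
  have "max_dev S \<omega> \<le> max_dev 0 \<omega> + (\<Sum>t<S. max_link t \<omega>)"
  proof (induction S)
    case (Suc S)
    then show ?case using max_dev_Suc_le[of S \<omega>] by simp
  qed simp
  moreover have "centred_sum (dev (proj S f)) \<omega> \<le> max_dev S \<omega>"
    unfolding max_dev_def using f proj_props net_finite by (intro Max_ge) auto
  moreover have "centred_sum (link S f) \<omega> \<le> 2 * (radius S)\<^sup>2 * W"
    using abs_centred_sum_le[OF link_measurable[OF f] abs_link_le_sq[OF f] \<omega>] by (metis abs_le_iff)
  ultimately show ?thesis using centred_sum_dev_split[OF f, where s=S and \<omega>=\<omega>] by linarith
qed

text \<open>At the coarsest level the Bernstein-type bound is only available for \<open>l \<le> 1\<close>; the
  entropy condition is exactly what puts the optimal \<open>l\<close> into this range.\<close>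

lemma expectation_max_dev_0_le:
  "(\<integral>\<omega>. max_dev 0 \<omega> \<partial>M) \<le> 2 * sqrt W * (\<sigma> * sqrt (ln (card (net 0))))"
proof -
  have "(\<integral>\<omega>. max_dev 0 \<omega> \<partial>M) \<le> 2 * sqrt (ln (card (net 0)) * (\<sigma>\<^sup>2 * W))"
    unfolding max_dev_def
  proof (rule expectation_Max_le_sqrt_ln_card[where K="2 * W" and \<Lambda>=1])
    show "centred_sum (dev g) \<in> borel_measurable M" if "g \<in> net 0" for g
      using that net_subset by (intro centred_sum_measurable dev_measurable) auto
    show "\<bar>centred_sum (dev g) \<omega>\<bar> \<le> 2 * W" if "g \<in> net 0" "\<omega> \<in> space M" for g \<omega>
      using that net_subset abs_centred_sum_le[where B=1, OF dev_measurable abs_dev_le] by auto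
    show "sqrt (ln (card (net 0)) / (\<sigma>\<^sup>2 * W)) \<le> 1"
      using ln_card_net0_le \<sigma>_pos weight_pos by simp
    fix l :: real and g assume l: "0 < l" "l \<le> 1" and "g \<in> net 0"
    then have g: "g \<in> F" using net_subset by auto
    have "(\<integral>\<omega>. exp (l * centred_sum (dev g) \<omega>) \<partial>M) \<le> exp (\<Sum>i<n. l\<^sup>2 * w i * \<sigma>\<^sup>2)"
      using w_range l
      by (intro centred_sum_mgf_le[OF dev_measurable[OF g] abs_dev_le[OF g]]
          P.centred_mgf_le_second_moment[OF dev_measurable[OF g] abs_dev_le[OF g]
            dev_second_moment_le[OF g]]) auto
    also have "(\<Sum>i<n. l\<^sup>2 * w i * \<sigma>\<^sup>2) = l\<^sup>2 * (\<sigma>\<^sup>2 * W)"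
      by (simp add: sum_distrib_left sum_distrib_right mult_ac)
    finally show "(\<integral>\<omega>. exp (l * centred_sum (dev g) \<omega>) \<partial>M) \<le> exp (l\<^sup>2 * (\<sigma>\<^sup>2 * W))" .
  qed (use net_finite net_nonempty \<sigma>_pos weight_pos in auto)
  also have "sqrt (ln (card (net 0)) * (\<sigma>\<^sup>2 * W)) = sqrt W * (\<sigma> * sqrt (ln (card (net 0))))"
    using \<sigma>_pos by (simp add: real_sqrt_mult mult_ac)
  finally show ?thesis by simp
qed

lemma expectation_max_link_le:
  "(\<integral>\<omega>. max_link t \<omega> \<partial>M)
     \<le> 2 * sqrt 2 * sqrt W * (radius (Suc t) * sqrt (ln (card (net (Suc t)))))"
proof -
  define L where "L = ln (card (net (Suc t)))"
  define A where "A = 2 * (radius (Suc t))\<^sup>2 * W"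
  have A: "A > 0" unfolding A_def using radius_pos[of "Suc t"] weight_pos by simp
  have "(\<integral>\<omega>. max_link t \<omega> \<partial>M) \<le> 2 * sqrt (L * A)"
    unfolding max_link_def L_def
  proof (rule expectation_Max_le_sqrt_ln_card[where K="2 * radius t * W" and \<Lambda>="sqrt (L / A) + 1"])
    show "centred_sum (link t g) \<in> borel_measurable M" if "g \<in> net (Suc t)" for g
      using that net_subset by (intro centred_sum_measurable link_measurable) auto
    show "\<bar>centred_sum (link t g) \<omega>\<bar> \<le> 2 * radius t * W" if "g \<in> net (Suc t)" "\<omega> \<in> space M" for g \<omega>
    proof -
      have "g \<in> F" using that net_subset by auto
      then show ?thesis using abs_centred_sum_le[OF link_measurable abs_link_le[where s=t] that(2)] by simp
    qed
    show "0 < sqrt (L / A) + 1" using A ln_card_net_nonneg[of "Suc t"] by (simp add: L_def add_nonneg_pos)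
    fix l :: real and g assume l: "0 < l" and "g \<in> net (Suc t)"
    then have g: "g \<in> F" using net_subset by auto
    have "(\<integral>\<omega>. exp (l * centred_sum (link t g) \<omega>) \<partial>M) \<le> exp (\<Sum>i<n. l\<^sup>2 * w i * (radius t)\<^sup>2 / 2)"
      using w_range l
      by (intro centred_sum_mgf_le[OF link_measurable[OF g] abs_link_le[OF g]]
          P.centred_mgf_le_hoeffding[OF link_measurable[OF g] abs_link_le[OF g]]) auto
    also have "(\<Sum>i<n. l\<^sup>2 * w i * (radius t)\<^sup>2 / 2) = l\<^sup>2 * A"
      unfolding A_def radius_Suc[of t]
      by (simp add: sum_distrib_left sum_distrib_right sum_divide_distrib power_mult_distrib mult_ac)
    finally show "(\<integral>\<omega>. exp (l * centred_sum (link t g) \<omega>) \<partial>M) \<le> exp (l\<^sup>2 * A)" .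
  qed (use net_finite net_nonempty A in \<open>auto simp: L_def\<close>)
  also have "sqrt (L * A) = sqrt 2 * sqrt W * (radius (Suc t) * sqrt L)"
    using radius_pos[of "Suc t"] by (simp add: A_def real_sqrt_mult mult_ac)
  finally show ?thesis unfolding L_def by simp
qed

lemma integrable_SUP_v_w_dev: "integrable M (\<lambda>\<omega>. SUP f\<in>F. v_w P n w \<xi> (dev f) \<omega>)"
proof -
  have v_meas: "(\<lambda>\<omega>. v_w P n w \<xi> (dev f) \<omega>) \<in> borel_measurable M" if "f \<in> F" for f
    unfolding v_w_eq_centred_sum
    using centred_sum_measurable[OF dev_measurable[OF that]] by measurable
  have v_bound: "\<bar>v_w P n w \<xi> (dev f) \<omega>\<bar> \<le> 2" if "f \<in> F" "\<omega> \<in> space M" for f \<omega>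
  proof -
    have "\<bar>centred_sum (dev f) \<omega>\<bar> \<le> 2 * 1 * W"
      by (rule abs_centred_sum_le[OF dev_measurable[OF that(1)] abs_dev_le[OF that(1)] that(2)])
    then have "\<bar>centred_sum (dev f) \<omega>\<bar> / W \<le> 2" using weight_pos by (simp add: divide_le_eq)
    then show ?thesis unfolding v_w_eq_centred_sum by (simp add: abs_div_pos[OF weight_pos])
  qed
  have bdd: "bdd_above ((\<lambda>f. v_w P n w \<xi> (dev f) \<omega>) ` F)" if "\<omega> \<in> space M" for \<omega>
    using v_bound that by (intro bdd_aboveI2[where M=2]) (auto simp: abs_le_iff)
  obtain f1 where f1: "f1 \<in> F" using F_ne by auto
  show ?thesis
  proof (rule integrable_const_bound[where B=2])
    show "(\<lambda>\<omega>. SUP f\<in>F. v_w P n w \<xi> (dev f) \<omega>) \<in> borel_measurable M"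
      by (rule borel_measurable_cSUP[OF F_count v_meas bdd])
    have "\<bar>SUP f\<in>F. v_w P n w \<xi> (dev f) \<omega>\<bar> \<le> 2" if \<omega>: "\<omega> \<in> space M" for \<omega>
    proof -
      have "(SUP f\<in>F. v_w P n w \<xi> (dev f) \<omega>) \<le> 2"
        using v_bound \<omega> by (intro cSUP_least[OF F_ne]) (auto simp: abs_le_iff)
      moreover have "- 2 \<le> v_w P n w \<xi> (dev f1) \<omega>" using v_bound[OF f1 \<omega>] by (simp add: abs_le_iff)
      moreover have "v_w P n w \<xi> (dev f1) \<omega> \<le> (SUP f\<in>F. v_w P n w \<xi> (dev f) \<omega>)"
        by (rule cSUP_upper[OF f1 bdd[OF \<omega>]])
      ultimately show ?thesis by (simp add: abs_le_iff)
    qed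
    then show "AE \<omega> in M. norm (SUP f\<in>F. v_w P n w \<xi> (dev f) \<omega>) \<le> 2" by auto
  qed
qed

lemma expectation_SUP_v_w_dev_le_chain:
  "W * (\<integral>\<omega>. (SUP f\<in>F. v_w P n w \<xi> (dev f) \<omega>) \<partial>M)
     \<le> (\<integral>\<omega>. max_dev 0 \<omega> \<partial>M) + (\<Sum>t<S. \<integral>\<omega>. max_link t \<omega> \<partial>M) + 2 * (radius S)\<^sup>2 * W"
proof -
  define chain where "chain \<omega> = max_dev 0 \<omega> + (\<Sum>t<S. max_link t \<omega>) + 2 * (radius S)\<^sup>2 * W" for \<omega>
  have int_chain: "integrable M chain"
    unfolding chain_def[abs_def] using integrable_max_dev integrable_max_link by auto
  have "(SUP f\<in>F. v_w P n w \<xi> (dev f) \<omega>) \<le> chain \<omega> / W" if "\<omega> \<in> space M" for \<omega>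
    using F_ne centred_sum_dev_le_chain[OF _ that] weight_pos
    by (intro cSUP_least) (auto simp: v_w_eq_centred_sum chain_def divide_right_mono)
  then have "(\<integral>\<omega>. (SUP f\<in>F. v_w P n w \<xi> (dev f) \<omega>) \<partial>M) \<le> (\<integral>\<omega>. chain \<omega> / W \<partial>M)"
    using integrable_SUP_v_w_dev int_chain by (intro integral_mono) auto
  also have "\<dots> = (\<integral>\<omega>. chain \<omega> \<partial>M) / W" by simp
  finally have "W * (\<integral>\<omega>. (SUP f\<in>F. v_w P n w \<xi> (dev f) \<omega>) \<partial>M) \<le> (\<integral>\<omega>. chain \<omega> \<partial>M)"
    using weight_pos by (simp add: field_simps)
  also have "(\<integral>\<omega>. chain \<omega> \<partial>M)
      = (\<integral>\<omega>. max_dev 0 \<omega> \<partial>M) + (\<Sum>t<S. \<integral>\<omega>. max_link t \<omega> \<partial>M) + 2 * (radius S)\<^sup>2 * W"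
    unfolding chain_def using integrable_max_dev integrable_max_link by (simp add: prob_space)
  finally show ?thesis .
qed

lemma sqrt_weight_expectation_SUP_v_w_dev_le_truncated:
  "sqrt W * (\<integral>\<omega>. (SUP f\<in>F. v_w P n w \<xi> (dev f) \<omega>) \<partial>M) \<le> 6 * \<phi> + 2 * \<sigma>\<^sup>2 * sqrt W * (1/4) ^ S"
proof -
  define X where "X = (\<integral>\<omega>. (SUP f\<in>F. v_w P n w \<xi> (dev f) \<omega>) \<partial>M)"
  define a where "a s = radius s * sqrt (ln (card (net s)))" for s
  define r where "r = sqrt W"
  have r: "r > 0" "r * r = W" using weight_pos by (simp_all add: r_def)
  have a_nonneg: "0 \<le> a s" for s unfolding a_def using radius_pos[of s] ln_card_net_nonneg[of s] by simp
  have "(\<Sum>t<S. \<integral>\<omega>. max_link t \<omega> \<partial>M) \<le> (\<Sum>t<S. 2 * sqrt 2 * r * a (Suc t))"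
    using expectation_max_link_le by (intro sum_mono) (simp add: a_def r_def)
  then have "W * X \<le> 2 * r * a 0 + (\<Sum>t<S. 2 * sqrt 2 * r * a (Suc t)) + 2 * (radius S)\<^sup>2 * W"
    using expectation_SUP_v_w_dev_le_chain[of S] expectation_max_dev_0_le
    unfolding X_def a_def r_def by (simp add: radius_def)
  moreover have "2 * r * a 0 \<le> 2 * sqrt 2 * r * a 0"
    using a_nonneg[of 0] r by (intro mult_right_mono) auto
  moreover have "2 * sqrt 2 * r * a 0 + (\<Sum>t<S. 2 * sqrt 2 * r * a (Suc t))
      = 4 * sqrt 2 * r * (\<Sum>s<Suc S. a s / 2)"
    unfolding sum.lessThan_Suc_shift by (simp add: sum_distrib_left algebra_simps)
  ultimately have "W * X \<le> 4 * sqrt 2 * r * (\<Sum>s<Suc S. a s / 2) + 2 * (radius S)\<^sup>2 * W"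
    by linarith
  moreover have "4 * sqrt 2 * r * (\<Sum>s<Suc S. a s / 2) \<le> 6 * r * \<phi>"
  proof -
    have "(\<Sum>s<Suc S. a s / 2) \<le> \<phi>"
      using dyadic_entropy_sum_le[of "Suc S"] by (simp add: a_def mult.commute)
    moreover have "sqrt 2 \<le> (3 / 2 :: real)" by (rule real_le_lsqrt) (auto simp: power2_eq_square)
    then have "4 * sqrt 2 \<le> (6::real)" by simp
    ultimately show ?thesis
      using r a_nonneg \<phi>_nonneg by (intro mult_mono sum_nonneg) auto
  qed
  ultimately have "W * X \<le> 6 * r * \<phi> + 2 * (radius S)\<^sup>2 * W" by (simp add: mult_ac)
  moreover have "r * (r * X) = W * X" by (simp only: mult.assoc[symmetric] r(2))
  moreover have "r * (6 * \<phi> + 2 * \<sigma>\<^sup>2 * r * (1/4) ^ S) = 6 * r * \<phi> + 2 * (radius S)\<^sup>2 * W"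
    by (simp add: radius_sq algebra_simps flip: r(2))
  ultimately have "r * (r * X) \<le> r * (6 * \<phi> + 2 * \<sigma>\<^sup>2 * r * (1/4) ^ S)" by linarith
  then have "r * X \<le> 6 * \<phi> + 2 * \<sigma>\<^sup>2 * r * (1/4) ^ S" using r(1) by (rule mult_left_le_imp_le)
  then show ?thesis unfolding X_def r_def .
qed

lemma sqrt_weight_expectation_SUP_v_w_dev_le:
  "sqrt W * (\<integral>\<omega>. (SUP f\<in>F. v_w P n w \<xi> (dev f) \<omega>) \<partial>M) \<le> 6 * \<phi>"
proof (rule le_of_le_add_power[where q="1/4" and d="2 * \<sigma>\<^sup>2 * sqrt W"])
  show "0 \<le> 2 * \<sigma>\<^sup>2 * sqrt W" using weight_pos by simp
qed (auto intro: sqrt_weight_expectation_SUP_v_w_dev_le_truncated)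

end

theorem mainTheorem8:
  fixes M :: "'b measure" and P :: "'a measure"
    and n :: nat and w :: "nat \<Rightarrow> real" and \<xi> :: "nat \<Rightarrow> 'b \<Rightarrow> 'a"
    and F :: "('a \<Rightarrow> real) set" and f0 :: "'a \<Rightarrow> real" and \<sigma> :: real
  assumes M: "prob_space M"
    and \<xi>_meas: "\<And>i. i < n \<Longrightarrow> \<xi> i \<in> measurable M P"
    and \<xi>_indep: "prob_space.indep_vars M (\<lambda>_. P) \<xi> {..<n}"
    and \<xi>_law: "\<And>i. i < n \<Longrightarrow> distr M P (\<xi> i) = P"
    and w01: "\<And>i. i < n \<Longrightarrow> 0 \<le> w i \<and> w i \<le> 1"
    and wpos: "(\<Sum>i<n. w i) > 0"
    and F_count: "countable F"
    and F_ne: "F \<noteq> {}"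
    and F_meas: "\<And>f. f \<in> F \<Longrightarrow> f \<in> borel_measurable P"
    and F_range: "\<And>f z. f \<in> F \<Longrightarrow> z \<in> space P \<Longrightarrow> 0 \<le> f z \<and> f z \<le> 1"
    and f0_meas: "f0 \<in> borel_measurable P"
    and f0_range: "\<And>z. z \<in> space P \<Longrightarrow> 0 \<le> f0 z \<and> f0 z \<le> 1"
    and \<sigma>_pos: "\<sigma> > 0"
    and F_var: "\<And>f. f \<in> F \<Longrightarrow> (\<integral>z. \<bar>f z - f0 z\<bar> \<partial>P) \<le> \<sigma>\<^sup>2"
    and cond: "4 * entropy_integral P F \<sigma> \<le> ennreal (\<sigma>\<^sup>2 * sqrt (\<Sum>i<n. w i))"
  shows "sqrt (\<Sum>i<n. w i) *
           max (\<integral>\<omega>. (SUP f\<in>F. v_w P n w \<xi> (\<lambda>z. f0 z - f z) \<omega>) \<partial>M)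
               (\<integral>\<omega>. (SUP f\<in>F. v_w P n w \<xi> (\<lambda>z. f z - f0 z) \<omega>) \<partial>M)
         \<le> 12 * enn2real (entropy_integral P F \<sigma>)"
proof -
  interpret weighted_iid_sample M P n w \<xi>
    using assms by (intro weighted_iid_sample.intro weighted_iid_sample_axioms.intro) auto
  interpret above: chaining M P n w \<xi> F f0 \<sigma> 1
    using assms by unfold_locales auto
  interpret below: chaining M P n w \<xi> F f0 \<sigma> "-1"
    using assms by unfold_locales auto
  define \<Phi> where "\<Phi> = enn2real (entropy_integral P F \<sigma>)"
  define E_above where "E_above = (\<integral>\<omega>. (SUP f\<in>F. v_w P n w \<xi> (\<lambda>z. f z - f0 z) \<omega>) \<partial>M)"
  define E_below where "E_below = (\<integral>\<omega>. (SUP f\<in>F. v_w P n w \<xi> (\<lambda>z. f0 z - f z) \<omega>) \<partial>M)"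
  have "above.dev f = (\<lambda>z. f z - f0 z)" "below.dev f = (\<lambda>z. f0 z - f z)" for f
    by (simp_all add: above.dev_def below.dev_def fun_eq_iff)
  then have "sqrt W * E_above \<le> 6 * \<Phi>" "sqrt W * E_below \<le> 6 * \<Phi>"
    using above.sqrt_weight_expectation_SUP_v_w_dev_le below.sqrt_weight_expectation_SUP_v_w_dev_le
    unfolding E_above_def E_below_def \<Phi>_def above.\<phi>_def below.\<phi>_def by simp_all
  moreover have "0 \<le> \<Phi>" unfolding \<Phi>_def by simp
  ultimately have "sqrt W * max E_below E_above \<le> 12 * \<Phi>"
    using weight_pos by (simp add: max_mult_distrib_left)
  then show ?thesis unfolding E_above_def E_below_def \<Phi>_def .
qed

end
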